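(* Let $\mathcal{C}$ be a unimodular simplicial complex on ground set $[n]$. Then for every face $S$ of $\mathcal{C}$, the link $\operatorname{link}_S(\mathcal{C})$ is unimodular.
   Context: A simplicial complex on $[n]$ is a family of subsets of $[n]$ closed under subsets; facets are inclusion-maximal faces. For a face $S$, $\operatorname{link}_S(\mathcal{C})=\{F\setminus S: F\in\mathcal{C}, S\subseteq F\}$, a complex on ground set $[n]\setminus S$. $\mathcal{A}_{\mathcal{C}}$ is the $0/1$ matrix with columns indexed by $\mathbf{i}\in\{1,2\}^n$ and rows indexed by pairs $(F,\mathbf{e})$, $F$ a facet, $\mathbf{e}\in\{1,2\}^F$; entry $1$ iff $\mathbf{e}=\mathbf{i}|_F$. An integer matrix is unimodular if every circuit (nonzero integer kernel vector with coprime entries and inclusion-minimal support) has entries in $\{0,\pm1\}$; $\mathcal{C}$ is unimodular if $\mathcal{A}_{\mathcal{C}}$ is. *)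

theory Defs
  imports Main "HOL-Library.FuncSet"
begin

definition simplicial_complex :: "nat set \<Rightarrow> nat set set \<Rightarrow> bool" where
  "simplicial_complex V C \<longleftrightarrow> (\<forall>F\<in>C. F \<subseteq> V) \<and> (\<forall>F\<in>C. \<forall>G. G \<subseteq> F \<longrightarrow> G \<in> C)"

definition facets :: "nat set set \<Rightarrow> nat set set" where
  "facets C = {F \<in> C. \<forall>G\<in>C. F \<subseteq> G \<longrightarrow> G = F}"

definition link :: "nat set \<Rightarrow> nat set set \<Rightarrow> nat set set" where
  "link S C = {F - S | F. F \<in> C \<and> S \<subseteq> F}"

text \<open>Columns of A_C: vectors i in {1,2}^V (extensional functions).\<close>
definition cols :: "nat set \<Rightarrow> (nat \<Rightarrow> nat) set" where
  "cols V = (PiE V (\<lambda>_. {1,2}))"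

text \<open>An integer vector indexed by the columns (zero outside) lies in the kernel of A_C:
  for every row (F,e), F a facet and e in {1,2}^F, the sum of u over the columns i with
  i restricted to F equal to e vanishes.\<close>
definition in_kernel :: "nat set \<Rightarrow> nat set set \<Rightarrow> ((nat \<Rightarrow> nat) \<Rightarrow> int) \<Rightarrow> bool" where
  "in_kernel V C u \<longleftrightarrow> (\<forall>x. x \<notin> cols V \<longrightarrow> u x = 0) \<and>
     (\<forall>F\<in>facets C. \<forall>e\<in>PiE F (\<lambda>_. {1,2}).
        (\<Sum>i\<in>cols V. (if restrict i F = e then u i else 0)) = 0)"

definition supp :: "((nat \<Rightarrow> nat) \<Rightarrow> int) \<Rightarrow> (nat \<Rightarrow> nat) set" where
  "supp u = {x. u x \<noteq> 0}"

definition circuit :: "nat set \<Rightarrow> nat set set \<Rightarrow> ((nat \<Rightarrow> nat) \<Rightarrow> int) \<Rightarrow> bool" where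
  "circuit V C u \<longleftrightarrow> in_kernel V C u \<and> supp u \<noteq> {} \<and> Gcd (u ` cols V) = 1 \<and>
     \<not> (\<exists>v. in_kernel V C v \<and> supp v \<noteq> {} \<and> supp v \<subset> supp u)"

definition unimodular_complex :: "nat set \<Rightarrow> nat set set \<Rightarrow> bool" where
  "unimodular_complex V C \<longleftrightarrow> (\<forall>u. circuit V C u \<longrightarrow> (\<forall>x. u x \<in> {-1, 0, 1}))"

end

theory Submission
  imports Defs
begin

text \<open>
  Write \<open>W = [n] - S\<close>, so that a column \<open>i \<in> {1,2}^[n]\<close> is a pair of a column \<open>j \<in> {1,2}^W\<close>
  and a column \<open>s \<in> {1,2}^S\<close>. The facets of the link are the sets \<open>F - S\<close> for the facets \<open>F \<supseteq> S\<close>.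

  A kernel vector \<open>u\<close> of the link lifts to the kernel vector \<open>U(j,s) = u(j) (-1)^{#{k. s k = 2}}\<close>
  of the complex: for facets containing \<open>S\<close> its row sums factor through those of \<open>u\<close>, and for the
  other facets the alternating sign makes the sum over \<open>s\<close> vanish. Conversely every fiber
  \<open>j \<mapsto> w(j,s)\<close> of a kernel vector \<open>w\<close> of the complex is a kernel vector of the link.

  Given a circuit \<open>u\<close> of the link, pick a circuit \<open>w\<close> of the complex supported inside the support
  of \<open>U\<close>; its entries are \<open>0, \<plusminus>1\<close>. A nonzero fiber of \<open>w\<close> is a kernel vector of the link with
  support inside that of \<open>u\<close>, hence proportional to \<open>u\<close>, and since its nonzero entries are units
  and \<open>u\<close> is primitive, \<open>u\<close> equals that fiber up to sign.
\<close>

section \<open>Splitting columns along a subset\<close>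

definition merge :: "nat set \<Rightarrow> (nat \<Rightarrow> nat) \<Rightarrow> (nat \<Rightarrow> nat) \<Rightarrow> nat \<Rightarrow> nat" where
  "merge S j s = (\<lambda>k. if k \<in> S then s k else j k)"

lemma finite_cols: "finite V \<Longrightarrow> finite (cols V)"
  unfolding cols_def by (intro finite_PiE) auto

lemma cols_nonempty: "cols V \<noteq> {}"
  by (simp add: cols_def PiE_eq_empty_iff)

lemma restrict_cols: "i \<in> cols V \<Longrightarrow> A \<subseteq> V \<Longrightarrow> restrict i A \<in> cols A"
  unfolding cols_def by auto

lemma merge_cols: "S \<subseteq> V \<Longrightarrow> j \<in> cols (V - S) \<Longrightarrow> s \<in> cols S \<Longrightarrow> merge S j s \<in> cols V"
  unfolding cols_def merge_def PiE_def extensional_def Pi_def by auto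

lemma restrict_merge_Diff: "j \<in> cols (V - S) \<Longrightarrow> restrict (merge S j s) (V - S) = j"
  unfolding cols_def merge_def PiE_def extensional_def restrict_def by (auto simp: fun_eq_iff)

lemma restrict_merge_same: "s \<in> cols S \<Longrightarrow> restrict (merge S j s) S = s"
  unfolding cols_def merge_def PiE_def extensional_def restrict_def by (auto simp: fun_eq_iff)

lemma merge_restrict: "S \<subseteq> V \<Longrightarrow> i \<in> cols V \<Longrightarrow> merge S (restrict i (V - S)) (restrict i S) = i"
  unfolding cols_def merge_def PiE_def extensional_def restrict_def by (auto simp: fun_eq_iff)

lemma restrict_merge_eq_iff:
  assumes "e \<in> extensional F"
  shows "restrict (merge S j s) F = e \<longleftrightarrow>
    restrict j (F - S) = restrict e (F - S) \<and> restrict s (F \<inter> S) = restrict e (F \<inter> S)"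
proof
  assume h: "restrict (merge S j s) F = e"
  show "restrict j (F - S) = restrict e (F - S) \<and> restrict s (F \<inter> S) = restrict e (F \<inter> S)"
  proof (intro conjI ext)
    show "restrict j (F - S) x = restrict e (F - S) x" "restrict s (F \<inter> S) x = restrict e (F \<inter> S) x" for x
      using fun_cong[OF h, of x] by (auto simp: merge_def)
  qed
next
  assume h: "restrict j (F - S) = restrict e (F - S) \<and> restrict s (F \<inter> S) = restrict e (F \<inter> S)"
  show "restrict (merge S j s) F = e"
  proof
    show "restrict (merge S j s) F x = e x" for x
      using fun_cong[OF conjunct1[OF h], of x] fun_cong[OF conjunct2[OF h], of x] assms
      by (cases "x \<in> S"; cases "x \<in> F") (auto simp: merge_def extensional_def)
  qed
qed

lemma bij_betw_merge:
  "S \<subseteq> V \<Longrightarrow> bij_betw (\<lambda>(j, s). merge S j s) (cols (V - S) \<times> cols S) (cols V)"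
  by (rule bij_betw_byWitness[where f' = "\<lambda>i. (restrict i (V - S), restrict i S)"])
    (auto simp: restrict_merge_Diff restrict_merge_same merge_restrict merge_cols restrict_cols)

lemma sum_cols_split:
  assumes "S \<subseteq> V"
  shows "(\<Sum>i\<in>cols V. f i) = (\<Sum>j\<in>cols (V - S). \<Sum>s\<in>cols S. f (merge S j s))"
proof -
  have "(\<Sum>i\<in>cols V. f i) = (\<Sum>(j, s)\<in>cols (V - S) \<times> cols S. f (merge S j s))"
    using sum.reindex_bij_betw[OF bij_betw_merge[OF assms], of f] by (simp add: case_prod_unfold)
  then show ?thesis
    by (simp add: sum.cartesian_product)
qed

lemma supp_subset_cols: "in_kernel V C v \<Longrightarrow> supp v \<subseteq> cols V"
  unfolding in_kernel_def supp_def by auto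

lemma in_kernel_lin_comb:
  assumes "in_kernel V C v" "in_kernel V C w"
  shows "in_kernel V C (\<lambda>x. a * v x + b * w x)"
proof -
  have "(\<Sum>i\<in>cols V. if restrict i F = e then a * v i + b * w i else 0) =
      a * (\<Sum>i\<in>cols V. if restrict i F = e then v i else 0) +
      b * (\<Sum>i\<in>cols V. if restrict i F = e then w i else 0)" for F e
    by (simp add: sum_distrib_left sum.distrib[symmetric] if_distrib cong: if_cong)
  then show ?thesis
    using assms unfolding in_kernel_def by auto
qed

lemma in_kernel_cancel_factor:
  assumes "in_kernel V C (\<lambda>x. g * w x)" "g \<noteq> 0"
  shows "in_kernel V C w"
proof -
  have "(\<Sum>i\<in>cols V. if restrict i F = e then g * w i else 0) =
      g * (\<Sum>i\<in>cols V. if restrict i F = e then w i else 0)" for F e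
    by (simp add: sum_distrib_left if_distrib cong: if_cong)
  then show ?thesis
    using assms unfolding in_kernel_def by auto
qed

lemma circuit_proportional:
  assumes u: "circuit V C u" and v: "in_kernel V C v" "supp v \<subseteq> supp u" and "u x0 \<noteq> 0"
  shows "u x0 * v x = v x0 * u x"
proof -
  define z where "z = (\<lambda>x. u x0 * v x + (- v x0) * u x)"
  have "supp z \<subseteq> supp u" "x0 \<in> supp u - supp z"
    using v(2) \<open>u x0 \<noteq> 0\<close> unfolding z_def supp_def by auto
  then have "supp z \<subset> supp u"
    by blast
  moreover have "in_kernel V C z"
    unfolding z_def using u v(1) by (intro in_kernel_lin_comb) (auto simp: circuit_def)
  ultimately have "supp z = {}"
    using u unfolding circuit_def by blast
  then show ?thesis
    unfolding z_def supp_def by (auto simp: algebra_simps)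
qed

text \<open>A kernel vector of minimal support, divided by the gcd of its entries, is a circuit.\<close>

lemma exists_circuit_supp_subset:
  assumes "finite V" "in_kernel V C u" "supp u \<noteq> {}"
  shows "\<exists>w. circuit V C w \<and> supp w \<subseteq> supp u"
proof -
  let ?P = "\<lambda>v. in_kernel V C v \<and> supp v \<noteq> {} \<and> supp v \<subseteq> supp u"
  obtain v where "?P v" and v_min: "\<And>v'. ?P v' \<Longrightarrow> card (supp v) \<le> card (supp v')"
    using ex_has_least_nat[of ?P u "\<lambda>v. card (supp v)"] assms by blast
  then have v: "in_kernel V C v" "supp v \<noteq> {}" "supp v \<subseteq> supp u" by auto
  have fin_supp: "finite (supp v')" if "in_kernel V C v'" for v'
    using finite_subset[OF supp_subset_cols[OF that] finite_cols[OF assms(1)]] .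
  define g where "g = Gcd (v ` cols V)"
  define w where "w = (\<lambda>x. v x div g)"
  have g_dvd: "g dvd v x" for x
    using v(1) unfolding g_def in_kernel_def by (cases "x \<in> cols V") auto
  then have vw: "v = (\<lambda>x. g * w x)"
    unfolding w_def by auto
  have "g \<noteq> 0"
    using v(1,2) supp_subset_cols[OF v(1)] unfolding g_def supp_def by auto
  then have supp_w: "supp w = supp v"
    unfolding supp_def vw by auto
  have v_img: "v ` cols V = (*) g ` w ` cols V"
    by (simp add: vw image_image)
  have "g = \<bar>g\<bar> * Gcd (w ` cols V)"
    using g_def[unfolded v_img Gcd_mult] by (simp add: abs_mult)
  moreover have "\<bar>g\<bar> = g"
    unfolding g_def by simp
  ultimately have "Gcd (w ` cols V) = 1"
    using \<open>g \<noteq> 0\<close> by (metis mult_cancel_left1)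
  moreover have "in_kernel V C w"
    using in_kernel_cancel_factor[of V C g w] v(1) \<open>g \<noteq> 0\<close> unfolding vw by blast
  moreover have "\<not> supp v' \<subset> supp w" if "in_kernel V C v'" "supp v' \<noteq> {}" for v'
  proof
    assume "supp v' \<subset> supp w"
    then have "card (supp v') < card (supp v)"
      using psubset_card_mono[OF fin_supp[OF v(1)]] supp_w by simp
    moreover have "card (supp v) \<le> card (supp v')"
      using v_min that v(3) \<open>supp v' \<subset> supp w\<close> supp_w by auto
    ultimately show False
      by simp
  qed
  ultimately have "circuit V C w"
    using v(2) supp_w unfolding circuit_def by auto
  then show ?thesis
    using v(3) supp_w by auto
qed

text \<open>Such a circuit is \<open>\<plusminus>v\<close>: it is proportional to \<open>v\<close> and its entries are coprime.\<close>

lemma circuit_unimodular_if_dominates: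
  assumes u: "circuit V C u" and v: "in_kernel V C v" "supp v \<subseteq> supp u" "supp v \<noteq> {}"
    and v_unit: "\<And>x. v x \<in> {-1, 0, 1}"
  shows "u x \<in> {-1, 0, 1}"
proof -
  obtain x0 where "v x0 \<noteq> 0"
    using v(3) unfolding supp_def by auto
  then have "u x0 \<noteq> 0" and v_x0: "v x0 * v x0 = 1"
    using v(2) v_unit[of x0] unfolding supp_def by auto
  have u_eq: "u y = v x0 * u x0 * v y" for y
    using arg_cong[OF circuit_proportional[OF u v(1,2) \<open>u x0 \<noteq> 0\<close>, of y], of "(*) (v x0)"] v_x0
    by (simp add: mult_ac)
  have "u x0 dvd Gcd (u ` cols V)"
  proof (rule Gcd_greatest)
    show "u x0 dvd b" if "b \<in> u ` cols V" for b
      using that unfolding image_iff by (metis u_eq dvd_triv_left dvd_mult_right)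
  qed
  then have "\<bar>u x0\<bar> = 1"
    using u unfolding circuit_def by simp
  moreover have "\<bar>v x0\<bar> = 1"
    using v_unit[of x0] \<open>v x0 \<noteq> 0\<close> by auto
  ultimately have "\<bar>u x\<bar> = \<bar>v x\<bar>"
    by (subst u_eq) (simp add: abs_mult)
  then show ?thesis
    using v_unit[of x] by auto
qed

lemma facet_of_link_facet:
  assumes G: "G \<in> facets (link S C)" and "simplicial_complex V C"
  shows "G \<union> S \<in> facets C" "G \<inter> S = {}" "G \<subseteq> V - S"
proof -
  obtain F where F: "G = F - S" "F \<in> C" "S \<subseteq> F"
    using G unfolding facets_def link_def by auto
  have "H = F" if "H \<in> C" "F \<subseteq> H" for H
  proof -
    have "H - S \<in> link S C" "G \<subseteq> H - S"
      using F that unfolding link_def by auto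
    then have "H - S = G"
      using G unfolding facets_def by auto
    then show ?thesis
      using F that by auto
  qed
  moreover have "G \<union> S = F"
    using F by auto
  ultimately show "G \<union> S \<in> facets C" "G \<inter> S = {}" "G \<subseteq> V - S"
    using F assms(2) unfolding facets_def simplicial_complex_def by auto
qed

lemma link_facet_of_facet:
  assumes F: "F \<in> facets C" and "S \<subseteq> F"
  shows "F - S \<in> facets (link S C)"
proof -
  have "H = F - S" if H: "H \<in> link S C" "F - S \<subseteq> H" for H
  proof -
    obtain K where K: "H = K - S" "K \<in> C" "S \<subseteq> K"
      using H(1) unfolding link_def by auto
    then have "K = F"
      using F \<open>S \<subseteq> F\<close> H(2) unfolding facets_def by blast
    then show ?thesis
      using K by simp
  qed
  moreover have "F - S \<in> link S C"
    using assms unfolding facets_def link_def by auto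
  ultimately show ?thesis
    unfolding facets_def by auto
qed

section \<open>Fibers of kernel vectors\<close>

definition fiber :: "nat set \<Rightarrow> nat set \<Rightarrow> (nat \<Rightarrow> nat) \<Rightarrow> ((nat \<Rightarrow> nat) \<Rightarrow> int) \<Rightarrow> (nat \<Rightarrow> nat) \<Rightarrow> int" where
  "fiber V S s v = (\<lambda>j. if j \<in> cols (V - S) then v (merge S j s) else 0)"

lemma in_kernel_fiber:
  assumes sc: "simplicial_complex V C" and "finite V" "S \<subseteq> V"
    and v: "in_kernel V C v" and s: "s \<in> cols S"
  shows "in_kernel (V - S) (link S C) (fiber V S s v)"
  unfolding in_kernel_def
proof (intro conjI allI impI ballI)
  show "x \<notin> cols (V - S) \<Longrightarrow> fiber V S s v x = 0" for x
    by (simp add: fiber_def)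
next
  fix G :: "nat set" and e :: "nat \<Rightarrow> nat"
  assume G: "G \<in> facets (link S C)" and e: "e \<in> PiE G (\<lambda>_. {1,2})"
  note G_up = facet_of_link_facet[OF G sc]
  have GS: "(G \<union> S) - S = G" "(G \<union> S) \<inter> S = S"
    using G_up(2) by auto
  have e_merge: "merge S e s \<in> PiE (G \<union> S) (\<lambda>_. {1,2})"
    using merge_cols[of S "G \<union> S" e s] GS(1) e s unfolding cols_def by simp
  have restrict_iff: "restrict (merge S j s') (G \<union> S) = merge S e s \<longleftrightarrow> restrict j G = e \<and> s' = s"
    if "s' \<in> cols S" for j s'
  proof -
    have "restrict (merge S e s) G = e" "restrict (merge S e s) S = s"
      using e s G_up(2) unfolding cols_def merge_def restrict_def PiE_def extensional_def
      by (auto simp: fun_eq_iff)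
    moreover have "restrict s' S = s'"
      using that unfolding cols_def by (simp add: PiE_def extensional_restrict)
    ultimately show ?thesis
      using restrict_merge_eq_iff[of "merge S e s" "G \<union> S" S j s'] e_merge GS by (simp add: PiE_def)
  qed
  have "(\<Sum>j\<in>cols (V - S). if restrict j G = e then fiber V S s v j else 0)
      = (\<Sum>j\<in>cols (V - S). \<Sum>s'\<in>cols S.
          if restrict (merge S j s') (G \<union> S) = merge S e s then v (merge S j s') else 0)"
    using s finite_cols[OF finite_subset[OF \<open>S \<subseteq> V\<close> \<open>finite V\<close>]]
    by (intro sum.cong refl) (simp add: restrict_iff fiber_def if_distrib cong: if_cong)
  also have "\<dots> = (\<Sum>i\<in>cols V. if restrict i (G \<union> S) = merge S e s then v i else 0)"
    by (rule sum_cols_split[OF \<open>S \<subseteq> V\<close>, symmetric])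
  also have "\<dots> = 0"
    using v G_up(1) e_merge unfolding in_kernel_def by blast
  finally show "(\<Sum>j\<in>cols (V - S). if restrict j G = e then fiber V S s v j else 0) = 0" .
qed

lemma exists_fiber_nonzero:
  assumes "S \<subseteq> V" "in_kernel V C w" "supp w \<noteq> {}"
  obtains s where "s \<in> cols S" "supp (fiber V S s w) \<noteq> {}"
proof -
  obtain i where "w i \<noteq> 0"
    using assms(3) unfolding supp_def by auto
  then have "i \<in> cols V"
    using assms(2) unfolding in_kernel_def by auto
  have "fiber V S (restrict i S) w (restrict i (V - S)) = w i"
    using restrict_cols[OF \<open>i \<in> cols V\<close>] merge_restrict[OF assms(1) \<open>i \<in> cols V\<close>]
    unfolding fiber_def by auto
  then have "restrict i (V - S) \<in> supp (fiber V S (restrict i S) w)"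
    using \<open>w i \<noteq> 0\<close> unfolding supp_def by simp
  then show thesis
    using that restrict_cols[OF \<open>i \<in> cols V\<close> assms(1)] by blast
qed

section \<open>Lifting kernel vectors from a link\<close>

definition parity_sign :: "nat set \<Rightarrow> (nat \<Rightarrow> nat) \<Rightarrow> int" where
  "parity_sign S s = (-1) ^ card {k \<in> S. s k = 2}"

lemma parity_sign_nonzero: "parity_sign S s \<noteq> 0"
  by (simp add: parity_sign_def)

lemma parity_sign_flip:
  assumes "finite S" "k \<in> S" "s \<in> cols S"
  shows "parity_sign S (s(k := 3 - s k)) = - parity_sign S s"
proof -
  let ?A = "{k' \<in> S. s k' = 2}"
  have "s k = 1 \<or> s k = 2"
    using assms unfolding cols_def by auto
  then show ?thesis
  proof
    assume "s k = 1"
    then have "{k' \<in> S. (s(k := 3 - s k)) k' = 2} = insert k ?A" "k \<notin> ?A"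
      using assms by auto
    then show ?thesis
      using assms(1) by (simp add: parity_sign_def)
  next
    assume "s k = 2"
    then have flipped: "{k' \<in> S. (s(k := 3 - s k)) k' = 2} = ?A - {k}" and "k \<in> ?A"
      using assms by auto
    have "card ?A = Suc (card (?A - {k}))"
      by (rule card.remove) (use assms(1) \<open>k \<in> ?A\<close> in auto)
    then show ?thesis
      unfolding parity_sign_def flipped by simp
  qed
qed

text \<open>Flipping a coordinate \<open>k\<close> outside \<open>T\<close> is a sign-reversing involution on the summands.\<close>

lemma sum_parity_sign_eq_0:
  assumes "finite S" "k \<in> S" "k \<notin> T"
  shows "(\<Sum>s\<in>cols S. if restrict s T = e then parity_sign S s else 0) = 0"
proof -
  define f where "f = (\<lambda>s. if restrict s T = e then parity_sign S s else 0)"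
  define flip where "flip = (\<lambda>s::nat \<Rightarrow> nat. s(k := 3 - s k))"
  have flip_cols: "flip s \<in> cols S" and flip_flip: "flip (flip s) = s" if "s \<in> cols S" for s
    using that assms unfolding flip_def cols_def PiE_def extensional_def Pi_def
    by (auto simp: fun_eq_iff)
  have "bij_betw flip (cols S) (cols S)"
    by (rule bij_betw_byWitness[where f' = flip]) (auto simp: flip_flip flip_cols)
  moreover have "restrict (flip s) T = restrict s T" for s
    using assms unfolding flip_def restrict_def by (auto simp: fun_eq_iff)
  ultimately have "(\<Sum>s\<in>cols S. f s) = (\<Sum>s\<in>cols S. f (flip s))"
    using sum.reindex_bij_betw[of flip "cols S" "cols S" f] by simp
  also have "\<dots> = (\<Sum>s\<in>cols S. - f s)"
    using \<open>\<And>s. restrict (flip s) T = restrict s T\<close>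
    by (auto simp: f_def flip_def parity_sign_flip assms intro!: sum.cong)
  finally show ?thesis
    unfolding f_def[symmetric] by (simp add: sum_negf)
qed

definition lift :: "nat set \<Rightarrow> nat set \<Rightarrow> ((nat \<Rightarrow> nat) \<Rightarrow> int) \<Rightarrow> (nat \<Rightarrow> nat) \<Rightarrow> int" where
  "lift V S u = (\<lambda>i. if i \<in> cols V then u (restrict i (V - S)) * parity_sign S (restrict i S) else 0)"

lemma lift_merge:
  "S \<subseteq> V \<Longrightarrow> j \<in> cols (V - S) \<Longrightarrow> s \<in> cols S \<Longrightarrow> lift V S u (merge S j s) = u j * parity_sign S s"
  by (simp add: lift_def merge_cols restrict_merge_Diff restrict_merge_same)

lemma in_kernel_lift:
  assumes sc: "simplicial_complex V C" and "finite V" "S \<in> C"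
    and u: "in_kernel (V - S) (link S C) u"
  shows "in_kernel V C (lift V S u)"
  unfolding in_kernel_def
proof (intro conjI allI impI ballI)
  show "x \<notin> cols V \<Longrightarrow> lift V S u x = 0" for x
    by (simp add: lift_def)
next
  fix F :: "nat set" and e :: "nat \<Rightarrow> nat"
  assume F: "F \<in> facets C" and e: "e \<in> PiE F (\<lambda>_. {1,2})"
  have "S \<subseteq> V"
    using sc \<open>S \<in> C\<close> unfolding simplicial_complex_def by auto
  define row_u where "row_u = (\<Sum>j\<in>cols (V - S). if restrict j (F - S) = restrict e (F - S) then u j else 0)"
  define row_S where
    "row_S = (\<Sum>s\<in>cols S. if restrict s (F \<inter> S) = restrict e (F \<inter> S) then parity_sign S s else 0)"
  have "(\<Sum>i\<in>cols V. if restrict i F = e then lift V S u i else 0) =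
      (\<Sum>j\<in>cols (V - S). \<Sum>s\<in>cols S. if restrict (merge S j s) F = e then lift V S u (merge S j s) else 0)"
    by (rule sum_cols_split[OF \<open>S \<subseteq> V\<close>])
  also have "\<dots> = row_u * row_S"
    unfolding row_u_def row_S_def sum_product using e \<open>S \<subseteq> V\<close>
    by (intro sum.cong refl) (auto simp: restrict_merge_eq_iff lift_merge PiE_def)
  also have "\<dots> = 0"
  proof (cases "S \<subseteq> F")
    case True
    have "F - S \<in> facets (link S C)" "restrict e (F - S) \<in> PiE (F - S) (\<lambda>_. {1,2})"
      using link_facet_of_facet[OF F True] e by auto
    then have "row_u = 0"
      using u unfolding in_kernel_def row_u_def by blast
    then show ?thesis by simp
  next
    case False
    then obtain k where "k \<in> S" "k \<notin> F \<inter> S" by auto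
    then have "row_S = 0"
      unfolding row_S_def
      using sum_parity_sign_eq_0 finite_subset[OF \<open>S \<subseteq> V\<close> \<open>finite V\<close>] by blast
    then show ?thesis by simp
  qed
  finally show "(\<Sum>i\<in>cols V. if restrict i F = e then lift V S u i else 0) = 0" .
qed

lemma supp_fiber_lift_subset:
  assumes "supp w \<subseteq> supp (lift V S u)" "S \<subseteq> V" "s \<in> cols S"
  shows "supp (fiber V S s w) \<subseteq> supp u"
  using assms by (auto simp: supp_def fiber_def lift_merge subset_iff)

lemma supp_lift_nonempty:
  assumes "supp u \<noteq> {}" "in_kernel (V - S) L u" "S \<subseteq> V"
  shows "supp (lift V S u) \<noteq> {}"
proof -
  obtain j where "u j \<noteq> 0"
    using assms(1) unfolding supp_def by auto
  obtain s where "s \<in> cols S"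
    using cols_nonempty by blast
  moreover have "j \<in> cols (V - S)"
    using \<open>u j \<noteq> 0\<close> assms(2) unfolding in_kernel_def by auto
  ultimately have "lift V S u (merge S j s) \<noteq> 0"
    using assms(3) \<open>u j \<noteq> 0\<close> by (simp add: lift_merge parity_sign_nonzero)
  then show ?thesis
    unfolding supp_def by auto
qed

theorem corollary3p10:
  fixes n :: nat and C :: "nat set set" and S :: "nat set"
  assumes "simplicial_complex {1..n} C"
    and "unimodular_complex {1..n} C"
    and "S \<in> C"
  shows "unimodular_complex ({1..n} - S) (link S C)"
  unfolding unimodular_complex_def
proof (intro allI impI)
  fix u x
  define V :: "nat set" where "V = {1..n}"
  assume "circuit ({1..n} - S) (link S C) u"
  then have u: "circuit (V - S) (link S C) u" "in_kernel (V - S) (link S C) u" "supp u \<noteq> {}"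
    unfolding V_def circuit_def by auto
  have sc: "simplicial_complex V C" and "finite V" and "S \<subseteq> V"
    using assms(1,3) unfolding V_def simplicial_complex_def by auto
  have "in_kernel V C (lift V S u)"
    by (rule in_kernel_lift[OF sc \<open>finite V\<close> assms(3) u(2)])
  then obtain w where w: "circuit V C w" "supp w \<subseteq> supp (lift V S u)"
    using exists_circuit_supp_subset \<open>finite V\<close> supp_lift_nonempty[OF u(3,2) \<open>S \<subseteq> V\<close>] by blast
  then have "fiber V S s w y \<in> {-1, 0, 1}" for s y
    using assms(2) unfolding V_def unimodular_complex_def fiber_def by auto
  moreover obtain s where "s \<in> cols S" "supp (fiber V S s w) \<noteq> {}"
    using exists_fiber_nonzero \<open>S \<subseteq> V\<close> w(1) unfolding circuit_def by blast
  moreover have "in_kernel (V - S) (link S C) (fiber V S s w)"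
    using in_kernel_fiber[OF sc \<open>finite V\<close> \<open>S \<subseteq> V\<close> _ \<open>s \<in> cols S\<close>] w(1) unfolding circuit_def by blast
  ultimately show "u x \<in> {-1, 0, 1}"
    using circuit_unimodular_if_dominates[OF u(1)] supp_fiber_lift_subset[OF w(2) \<open>S \<subseteq> V\<close>] by blast
qed

end
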